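(* Let $g\ne0$ be a real $M_1\times M_2$ matrix with singular value decomposition $g=VSW^T$, let $d$ be the multiplicity of the largest singular value $\|g\|_2$, and let $V^d,W^d$ be as in the context. If $$\|V^d_{i,*}\|=\sqrt{d/M_1}\ \ \forall i\in\{1,\dots,M_1\}\quad\text{and}\quad \|W^d_{j,*}\|=\sqrt{d/M_2}\ \ \forall j\in\{1,\dots,M_2\},$$ then there exist finite-dimensional Hilbert spaces $\mathcal H_1,\mathcal H_2$, a state $\rho$ on $\mathcal H_1\otimes\mathcal H_2$ and observables $\mathcal A_i(x_i)$ (Hermitian, eigenvalues in $[-1,1]$) with $\sum_{x_1,x_2} g_{x_1,x_2}\operatorname{tr}(\rho\,\mathcal A_1(x_1)\otimes\mathcal A_2(x_2))=\sqrt{M_1M_2}\,\|g\|_2$; i.e. the bound of Theorem 1 is tight for $g$.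
   Context: $\|g\|_2$ is the largest singular value of $g$. Singular value decomposition: $V$ orthogonal $M_1\times M_1$, $W$ orthogonal $M_2\times M_2$, $S$ diagonal $M_1\times M_2$ with nonnegative nonincreasing diagonal, $g=VSW^T$. $V^d$ (resp. $W^d$) consists of the first $d$ columns of $V$ (resp. $W$); $A_{i,*}$ denotes the $i$-th row of a matrix $A$ as a column vector. Theorem 1 states $\sum_{x_1,x_2}g_{x_1,x_2}E(x_1,x_2)\le\sqrt{M_1M_2}\|g\|_2$ for all quantum strategies. *)

theory Defs
  imports "Jordan_Normal_Form.Schur_Decomposition" "Jordan_Normal_Form.Char_Poly"
begin

text \<open>Finite-dimensional Hilbert spaces are modelled as C^n, operators as complex n x n matrices.\<close>

definition hermitian_mat :: "complex mat \<Rightarrow> bool" where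
  "hermitian_mat A \<longleftrightarrow> A \<in> carrier_mat (dim_row A) (dim_row A) \<and> mat_adjoint A = A"

definition observable :: "nat \<Rightarrow> complex mat \<Rightarrow> bool" where
  "observable n A \<longleftrightarrow> A \<in> carrier_mat n n \<and> hermitian_mat A \<and>
     (\<forall>k. eigenvalue A k \<longrightarrow> k \<in> complex_of_real ` {-1..1})"

definition psd_mat :: "nat \<Rightarrow> complex mat \<Rightarrow> bool" where
  "psd_mat n A \<longleftrightarrow> A \<in> carrier_mat n n \<and> hermitian_mat A \<and>
     (\<forall>v \<in> carrier_vec n. conjugate v \<bullet> (A *\<^sub>v v) \<in> complex_of_real ` {0..})"

definition mat_trace :: "'a :: comm_monoid_add mat \<Rightarrow> 'a" where
  "mat_trace A = (\<Sum>i<dim_row A. A $$ (i,i))"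

definition density_mat :: "nat \<Rightarrow> complex mat \<Rightarrow> bool" where
  "density_mat n \<rho> \<longleftrightarrow> psd_mat n \<rho> \<and> mat_trace \<rho> = 1"

text \<open>Kronecker (tensor) product of matrices; C^n1 \<otimes> C^n2 = C^(n1*n2).\<close>
definition kron :: "'a :: times mat \<Rightarrow> 'a mat \<Rightarrow> 'a mat" where
  "kron A B = mat (dim_row A * dim_row B) (dim_col A * dim_col B)
     (\<lambda>(i,j). A $$ (i div dim_row B, j div dim_col B) * B $$ (i mod dim_row B, j mod dim_col B))"

definition orthogonal_real_mat :: "nat \<Rightarrow> real mat \<Rightarrow> bool" where
  "orthogonal_real_mat n V \<longleftrightarrow> V \<in> carrier_mat n n \<and>
     V * transpose_mat V = 1\<^sub>m n \<and> transpose_mat V * V = 1\<^sub>m n"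

definition is_svd :: "nat \<Rightarrow> nat \<Rightarrow> real mat \<Rightarrow> real mat \<Rightarrow> real mat \<Rightarrow> real mat \<Rightarrow> bool" where
  "is_svd M1 M2 g V S W \<longleftrightarrow>
     orthogonal_real_mat M1 V \<and> orthogonal_real_mat M2 W \<and> S \<in> carrier_mat M1 M2 \<and>
     (\<forall>i<M1. \<forall>j<M2. i \<noteq> j \<longrightarrow> S $$ (i,j) = 0) \<and>
     (\<forall>i<min M1 M2. 0 \<le> S $$ (i,i)) \<and>
     (\<forall>i j. i \<le> j \<longrightarrow> j < min M1 M2 \<longrightarrow> S $$ (j,j) \<le> S $$ (i,i)) \<and>
     g = V * S * transpose_mat W"

text \<open>Norm of the i-th row of the matrix consisting of the first d columns of V.\<close>
definition row_norm_first :: "nat \<Rightarrow> real mat \<Rightarrow> nat \<Rightarrow> real" where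
  "row_norm_first d V i = sqrt (\<Sum>k<d. (V $$ (i,k))\<^sup>2)"

end

theory Submission
  imports Defs
begin

(* Let d be the multiplicity of the top singular value s = S(0,0), and let u_x, v_y be the
   rows of the first d columns of V and W, rescaled by sqrt(M1/d), sqrt(M2/d); by the
   row-norm hypotheses these are real unit vectors in R^d.

   On C^(2^d) the Jordan-Wigner matrices
      Gamma_0, ..., Gamma_(d-1) are real symmetric, pairwise anticommuting and square to I.
      Hence for a real unit vector u, A(u) = sum_k u_k Gamma_k squares to I, so it is an
      observable, and sum_ab A(u)_ab A(v)_ab = 2^d <u,v>.
   2. The maximally entangled state rho_N on C^N (x) C^N, for which
      tr(rho_N (A (x) B)) = (1/N) sum_ab A_ab B_ab; so the correlations are <u_x, v_y>.
   3. SVD facts: S = V^T g W and the first d diagonal entries of S equal s, so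
      sum g(x,y) <u_x, v_y> = (sqrt(M1 M2) / d) * d * s = sqrt(M1 M2) s.
   The main theorem combines these with A1(x) = A(u_x), A2(y) = A(v_y), rho = rho_(2^d). *)

definition jw_sign :: "nat \<Rightarrow> nat \<Rightarrow> complex" where
  "jw_sign k a = (-1) ^ card {j. j < k \<and> bit a j}"

lemma flip_bit_less_pow2:
  assumes a: "a < 2^d" and k: "k < d"
  shows "flip_bit k (a::nat) < 2^d"
proof -
  have "take_bit d a = a" using a by (simp add: take_bit_nat_eq_self_iff)
  then have "take_bit d (flip_bit k a) = flip_bit k a" using k by (simp add: take_bit_flip_bit_eq)
  then show ?thesis by (simp add: take_bit_nat_eq_self_iff)
qed

lemma flip_bit_flip_bit [simp]: "flip_bit k (flip_bit k (a::nat)) = a"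
  by (rule bit_eqI) (auto simp: bit_flip_bit_iff)

lemma flip_bit_commute: "flip_bit l (flip_bit k (a::nat)) = flip_bit k (flip_bit l a)"
  by (rule bit_eqI) (auto simp: bit_flip_bit_iff)

lemma flip_bit_inj:
  assumes "flip_bit k (a::nat) = flip_bit l a"
  shows "k = l"
proof (rule ccontr)
  assume "k \<noteq> l"
  then have "bit (flip_bit k a) k \<noteq> bit (flip_bit l a) k" by (simp add: bit_flip_bit_iff)
  then show False using assms by simp
qed

lemma jw_sign_flip_ge: "k \<le> j \<Longrightarrow> jw_sign k (flip_bit j a) = jw_sign k a"
proof -
  assume "k \<le> j"
  then have "{i. i < k \<and> bit (flip_bit j a) i} = {i. i < k \<and> bit a i}"
    by (auto simp: bit_flip_bit_iff)
  then show ?thesis by (simp add: jw_sign_def)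
qed

lemma jw_sign_flip_lt:
  assumes jk: "j < k"
  shows "jw_sign k (flip_bit j a) = - jw_sign k a"
proof -
  let ?B = "{i. i < k \<and> bit a i}"
  show ?thesis
  proof (cases "bit a j")
    case True
    then have "?B = insert j {i. i < k \<and> bit (flip_bit j a) i}"
      and "j \<notin> {i. i < k \<and> bit (flip_bit j a) i}"
      using jk by (auto simp: bit_flip_bit_iff)
    then have "card ?B = Suc (card {i. i < k \<and> bit (flip_bit j a) i})" by simp
    then show ?thesis unfolding jw_sign_def by simp
  next
    case False
    then have "{i. i < k \<and> bit (flip_bit j a) i} = insert j ?B" and "j \<notin> ?B"
      using jk by (auto simp: bit_flip_bit_iff)
    then have "card {i. i < k \<and> bit (flip_bit j a) i} = Suc (card ?B)" by simp
    then show ?thesis unfolding jw_sign_def by simp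
  qed
qed

lemma jw_sign_square [simp]: "jw_sign k a * jw_sign k a = 1"
  unfolding jw_sign_def by (simp add: power_mult_distrib[symmetric])

section \<open>Jordan--Wigner matrices and Clifford observables\<close>

text \<open>Entries of the k-th Jordan--Wigner matrix Gamma_k on C^(2^d): it maps the basis vector
  of a to jw_sign k a times the basis vector of flip_bit k a.\<close>
definition gamma :: "nat \<Rightarrow> nat \<Rightarrow> nat \<Rightarrow> complex" where
  "gamma k a b = (if b = flip_bit k a then jw_sign k a else 0)"

definition clifford_obs :: "nat \<Rightarrow> (nat \<Rightarrow> complex) \<Rightarrow> complex mat" where
  "clifford_obs d u = mat (2^d) (2^d) (\<lambda>(a,b). \<Sum>k<d. u k * gamma k a b)"

lemma clifford_obs_carrier: "clifford_obs d u \<in> carrier_mat (2^d) (2^d)"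
  unfolding clifford_obs_def by simp

lemma gamma_symmetric: "gamma k a b = gamma k b a"
  unfolding gamma_def using jw_sign_flip_ge[of k k] by auto

lemma sum_gamma_row:
  assumes a: "a < 2^d" and k: "k < d"
  shows "(\<Sum>b\<in>{0..<2^d}. gamma k a b * f b) = jw_sign k a * f (flip_bit k a)"
proof -
  have "(\<Sum>b\<in>{0..<2^d}. gamma k a b * f b)
      = (\<Sum>b\<in>{0..<2^d}. if b = flip_bit k a then jw_sign k a * f b else 0)"
    unfolding gamma_def by (rule sum.cong) auto
  also have "\<dots> = jw_sign k a * f (flip_bit k a)"
    using flip_bit_less_pow2[OF a k] by (simp add: sum.delta')
  finally show ?thesis .
qed

lemma gamma_rows_orthonormal:
  assumes "a < 2^d" and "k < d"
  shows "(\<Sum>b\<in>{0..<2^d}. gamma k a b * gamma l a b) = (if k = l then 1 else 0)"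
  unfolding sum_gamma_row[OF assms] unfolding gamma_def using flip_bit_inj[of k a l] by auto

text \<open>The entry (a,c) of the product Gamma_k Gamma_l.\<close>
definition gamma_prod :: "nat \<Rightarrow> nat \<Rightarrow> nat \<Rightarrow> nat \<Rightarrow> complex" where
  "gamma_prod k l a c = jw_sign k a * gamma l (flip_bit k a) c"

lemma gamma_prod_entry:
  assumes "a < 2^d" and "k < d"
  shows "(\<Sum>b\<in>{0..<2^d}. gamma k a b * gamma l b c) = gamma_prod k l a c"
  unfolding gamma_prod_def by (rule sum_gamma_row[OF assms])

text \<open>Gamma_k and Gamma_l anticommute for k < l: the sign picked up by the lower flip
  is reversed by the higher one.\<close>
lemma gamma_prod_anticommute_lt:
  assumes "k < l"
  shows "gamma_prod k l a c = - gamma_prod l k a c"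
proof -
  have "jw_sign k (flip_bit l a) = jw_sign k a" using assms by (simp add: jw_sign_flip_ge)
  moreover have "jw_sign l (flip_bit k a) = - jw_sign l a" using assms by (rule jw_sign_flip_lt)
  ultimately show ?thesis
    unfolding gamma_prod_def gamma_def by (simp add: flip_bit_commute[of k l])
qed

lemma gamma_prod_anticommute:
  "gamma_prod k l a c + gamma_prod l k a c = (if k = l \<and> a = c then 2 else 0)"
proof (cases k l rule: linorder_cases)
  case equal
  then show ?thesis
    unfolding gamma_prod_def gamma_def using jw_sign_flip_ge[of k k a] by auto
qed (use gamma_prod_anticommute_lt in auto)

lemma double_sum_symmetrize:
  fixes f :: "nat \<Rightarrow> nat \<Rightarrow> complex"
  shows "(\<Sum>k\<in>K. \<Sum>l\<in>K. f k l) = (\<Sum>k\<in>K. \<Sum>l\<in>K. f k l + f l k) / 2"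
  by (simp add: sum.distrib sum.swap[of f])

lemma clifford_obs_square:
  assumes u1: "(\<Sum>k<d. u k * u k) = 1"
  shows "clifford_obs d u * clifford_obs d u = 1\<^sub>m (2^d)"
proof (rule eq_matI)
  fix a c assume "a < dim_row (1\<^sub>m (2^d) :: complex mat)" "c < dim_col (1\<^sub>m (2^d) :: complex mat)"
  then have a: "a < 2^d" and c: "c < 2^d" by auto
  have "(clifford_obs d u * clifford_obs d u) $$ (a,c)
      = (\<Sum>b\<in>{0..<2^d}. (\<Sum>k<d. u k * gamma k a b) * (\<Sum>l<d. u l * gamma l b c))"
    using a c unfolding clifford_obs_def by (simp add: scalar_prod_def)
  also have "\<dots> = (\<Sum>b\<in>{0..<2^d}. \<Sum>k<d. \<Sum>l<d. u k * u l * (gamma k a b * gamma l b c))"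
    unfolding sum_product by (intro sum.cong refl) (simp add: mult_ac)
  also have "\<dots> = (\<Sum>k<d. \<Sum>l<d. u k * u l * (\<Sum>b\<in>{0..<2^d}. gamma k a b * gamma l b c))"
    by (simp add: sum.swap[of _ "{0..<2^d}"] sum_distrib_left)
  also have "\<dots> = (\<Sum>k<d. \<Sum>l<d. u k * u l * gamma_prod k l a c)"
    using gamma_prod_entry[OF a] by (intro sum.cong refl) simp
  also have "\<dots> = (\<Sum>k<d. \<Sum>l<d. u k * u l * (gamma_prod k l a c + gamma_prod l k a c)) / 2"
    by (subst double_sum_symmetrize) (simp add: algebra_simps)
  also have "\<dots> = (\<Sum>k<d. \<Sum>l<d. if k = l \<and> a = c then 2 * (u k * u l) else 0) / 2"
    unfolding gamma_prod_anticommute by (intro arg_cong[where f = "\<lambda>x. x / 2"] sum.cong refl) simp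
  also have "\<dots> = (if a = c then \<Sum>k<d. u k * u k else 0)"
    by (simp add: sum_distrib_left[symmetric])
  also have "\<dots> = 1\<^sub>m (2^d) $$ (a,c)"
    using u1 a c by simp
  finally show "(clifford_obs d u * clifford_obs d u) $$ (a,c) = 1\<^sub>m (2^d) $$ (a,c)" .
qed (auto simp: clifford_obs_def)

lemma involution_eigenvalue:
  fixes A :: "complex mat"
  assumes A: "A \<in> carrier_mat n n" and AA: "A * A = 1\<^sub>m n" and ev: "eigenvalue A k"
  shows "k \<in> complex_of_real ` {-1..1}"
proof -
  obtain v where v: "v \<in> carrier_vec n" "v \<noteq> 0\<^sub>v n" "A *\<^sub>v v = k \<cdot>\<^sub>v v"
    using ev A unfolding eigenvalue_def eigenvector_def by auto
  have "v = (A * A) *\<^sub>v v" using AA v by simp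
  also have "\<dots> = (k * k) \<cdot>\<^sub>v v"
    using A v by (simp add: assoc_mult_mat_vec[symmetric] mult_mat_vec smult_smult_assoc)
  finally have vv: "v = (k * k) \<cdot>\<^sub>v v" .
  obtain i where i: "i < n" "v $ i \<noteq> 0"
    using v(1,2) by (metis carrier_vecD eq_vecI index_zero_vec(1,2))
  have "(k * k - 1) * v $ i = 0"
    using arg_cong[OF vv, of "\<lambda>w. w $ i"] i v by (simp add: algebra_simps)
  then have "k = 1 \<or> k = -1" using i square_eq_1_iff[of k] by simp
  then show ?thesis by (auto intro: image_eqI[where x=1] image_eqI[where x="-1"])
qed

lemma hermitian_matI:
  fixes A :: "complex mat"
  assumes A: "A \<in> carrier_mat n n"
    and h: "\<And>i j. i < n \<Longrightarrow> j < n \<Longrightarrow> cnj (A $$ (j,i)) = A $$ (i,j)"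
  shows "hermitian_mat A"
  unfolding hermitian_mat_def mat_adjoint_def
  using A h by (auto intro!: eq_matI simp: mat_of_rows_index)

lemma clifford_obs_observable:
  assumes real: "\<And>k. cnj (u k) = u k" and unit: "(\<Sum>k<d. u k * u k) = 1"
  shows "observable (2^d) (clifford_obs d u)"
proof -
  have "cnj (gamma k j i) = gamma k i j" for k i j
    unfolding gamma_symmetric[of k j i] unfolding gamma_def jw_sign_def by simp
  then have "hermitian_mat (clifford_obs d u)"
    using real by (intro hermitian_matI[OF clifford_obs_carrier]) (simp add: clifford_obs_def)
  then show ?thesis
    unfolding observable_def
    using clifford_obs_carrier involution_eigenvalue[OF clifford_obs_carrier clifford_obs_square[OF unit]]
    by blast
qed

lemma clifford_obs_pairing:
  "(\<Sum>a\<in>{0..<2^d}. \<Sum>b\<in>{0..<2^d}. clifford_obs d u $$ (a,b) * clifford_obs d v $$ (a,b))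
     = of_nat (2^d) * (\<Sum>k<d. u k * v k)"
proof -
  have row: "(\<Sum>b\<in>{0..<2^d}. clifford_obs d u $$ (a,b) * clifford_obs d v $$ (a,b))
      = (\<Sum>k<d. u k * v k)" if a: "a < 2^d" for a
  proof -
    have "(\<Sum>b\<in>{0..<2^d}. clifford_obs d u $$ (a,b) * clifford_obs d v $$ (a,b))
        = (\<Sum>b\<in>{0..<2^d}. \<Sum>k<d. \<Sum>l<d. u k * v l * (gamma k a b * gamma l a b))"
      using a by (intro sum.cong refl)
        (simp add: clifford_obs_def, subst sum_product, intro sum.cong refl, simp add: mult_ac)
    also have "\<dots> = (\<Sum>k<d. \<Sum>l<d. u k * v l * (\<Sum>b\<in>{0..<2^d}. gamma k a b * gamma l a b))"
      by (simp add: sum.swap[of _ "{0..<2^d}"] sum_distrib_left)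
    also have "\<dots> = (\<Sum>k<d. \<Sum>l<d. if k = l then u k * v l else 0)"
      using gamma_rows_orthonormal[OF a] by (intro sum.cong refl) simp
    finally show ?thesis by simp
  qed
  then show ?thesis by simp
qed

section \<open>The maximally entangled state\<close>

text \<open>The maximally entangled state on C^N (x) C^N = C^(N*N): the projection onto
  (1/sqrt N) sum_a e_a (x) e_a, where e_a (x) e_a is the basis vector with index a*N+a.\<close>
definition max_ent :: "nat \<Rightarrow> complex mat" where
  "max_ent N = mat (N*N) (N*N)
     (\<lambda>(p,q). if p div N = p mod N \<and> q div N = q mod N then 1 / of_nat N else 0)"

lemma max_ent_carrier: "max_ent N \<in> carrier_mat (N*N) (N*N)"
  unfolding max_ent_def by simp

lemma diag_index_less:
  assumes "a < (N::nat)"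
  shows "a*N + a < N*N"
proof -
  have "a*N + a < (a+1)*N" using assms by simp
  also have "\<dots> \<le> N*N" using assms by (intro mult_right_mono) auto
  finally show ?thesis .
qed

lemma diag_indices:
  assumes N: "0 < (N::nat)"
  shows "{p\<in>{0..<N*N}. p div N = p mod N} = (\<lambda>a. a*N+a) ` {0..<N}"
proof
  show "{p\<in>{0..<N*N}. p div N = p mod N} \<subseteq> (\<lambda>a. a*N+a) ` {0..<N}"
  proof
    fix p assume "p \<in> {p\<in>{0..<N*N}. p div N = p mod N}"
    then have "p = (p mod N) * N + p mod N" using div_mult_mod_eq[of p N] by simp
    then show "p \<in> (\<lambda>a. a*N+a) ` {0..<N}" using N by (intro image_eqI[where x="p mod N"]) auto
  qed
  show "(\<lambda>a. a*N+a) ` {0..<N} \<subseteq> {p\<in>{0..<N*N}. p div N = p mod N}"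
    using N diag_index_less by auto
qed

lemma sum_diag_indices:
  fixes F :: "nat \<Rightarrow> complex"
  assumes N: "0 < N"
  shows "(\<Sum>p\<in>{0..<N*N}. if p div N = p mod N then F p else 0) = (\<Sum>a\<in>{0..<N}. F (a*N+a))"
proof -
  have inj: "inj_on (\<lambda>a. a*N+a) {0..<N}"
    by (rule inj_onI) (metis atLeastLessThan_iff mod_mult_self3 mod_less)
  have "(\<Sum>p\<in>{0..<N*N}. if p div N = p mod N then F p else 0)
      = sum F {p\<in>{0..<N*N}. p div N = p mod N}"
    by (rule sum.inter_filter[symmetric]) simp
  also have "\<dots> = sum F ((\<lambda>a. a*N+a) ` {0..<N})"
    by (simp only: diag_indices[OF N])
  also have "\<dots> = (\<Sum>a\<in>{0..<N}. F (a*N+a))"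
    using inj by (simp add: sum.reindex)
  finally show ?thesis .
qed

lemma max_ent_trace: "0 < N \<Longrightarrow> mat_trace (max_ent N) = 1"
  unfolding mat_trace_def max_ent_def
  by (simp add: atLeast0LessThan[symmetric] sum_diag_indices[where F = "\<lambda>_. 1 / of_nat N"])

text \<open>Its quadratic form is v^* rho v = |w|^2 / N with w the sum of the diagonal
  coordinates of v, hence nonnegative.\<close>
lemma max_ent_density: "0 < N \<Longrightarrow> density_mat (N*N) (max_ent N)"
proof -
  assume N: "0 < N"
  have herm: "hermitian_mat (max_ent N)"
    by (rule hermitian_matI[OF max_ent_carrier]) (auto simp: max_ent_def)
  have "conjugate v \<bullet> (max_ent N *\<^sub>v v) \<in> complex_of_real ` {0..}"
    if v: "v \<in> carrier_vec (N*N)" for v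
  proof -
    define w where "w = (\<Sum>q\<in>{0..<N*N}. if q div N = q mod N then v $ q else 0)"
    have entry: "(max_ent N *\<^sub>v v) $ p = (if p div N = p mod N then w / of_nat N else 0)"
      if "p < N*N" for p
      using that v unfolding max_ent_def w_def
      by (auto simp: scalar_prod_def sum_divide_distrib intro!: sum.cong)
    have "conjugate v \<bullet> (max_ent N *\<^sub>v v) = (\<Sum>p\<in>{0..<N*N}. cnj (v $ p) * (max_ent N *\<^sub>v v) $ p)"
      using v unfolding scalar_prod_def by (simp add: max_ent_def)
    also have "\<dots> = (\<Sum>p\<in>{0..<N*N}. (if p div N = p mod N then cnj (v $ p) else 0) * (w / of_nat N))"
      by (rule sum.cong) (auto simp: entry)
    also have "\<dots> = (\<Sum>p\<in>{0..<N*N}. if p div N = p mod N then cnj (v $ p) else 0) * (w / of_nat N)"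
      by (rule sum_distrib_right[symmetric])
    also have "(\<Sum>p\<in>{0..<N*N}. if p div N = p mod N then cnj (v $ p) else 0) = cnj w"
      unfolding w_def cnj_sum by (rule sum.cong) auto
    also have "cnj w * (w / of_nat N) = complex_of_real ((norm w)^2 / real N)"
      using complex_norm_square[of w] by (simp add: mult.commute)
    finally have quad: "conjugate v \<bullet> (max_ent N *\<^sub>v v) = complex_of_real ((norm w)^2 / real N)" .
    show ?thesis unfolding quad by (rule image_eqI[OF refl]) simp
  qed
  then show ?thesis
    unfolding density_mat_def psd_mat_def using max_ent_carrier herm max_ent_trace[OF N] by blast
qed

lemma max_ent_correlation:
  fixes A B :: "complex mat"
  assumes N: "0 < N" and A: "A \<in> carrier_mat N N" and B: "B \<in> carrier_mat N N"
  shows "mat_trace (max_ent N * kron A B)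
       = (\<Sum>a\<in>{0..<N}. \<Sum>b\<in>{0..<N}. A $$ (a,b) * B $$ (a,b)) / of_nat N"
proof -
  define K where "K = kron A B"
  have K: "K \<in> carrier_mat (N*N) (N*N)" using A B unfolding K_def kron_def by auto
  have K_diag: "K $$ (a*N+a, b*N+b) = A $$ (a,b) * B $$ (a,b)" if "a < N" "b < N" for a b
  proof -
    have "(a*N+a) div N = a" "(a*N+a) mod N = a" "(b*N+b) div N = b" "(b*N+b) mod N = b"
      using that N by simp_all
    then show ?thesis
      using that A B diag_index_less[of a N] diag_index_less[of b N] unfolding K_def kron_def by simp
  qed
  have "mat_trace (max_ent N * K)
      = (\<Sum>p\<in>{0..<N*N}. \<Sum>q\<in>{0..<N*N}. max_ent N $$ (p,q) * K $$ (q,p))"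
    unfolding mat_trace_def using K
    by (intro sum.cong) (auto simp: max_ent_def scalar_prod_def atLeast0LessThan)
  also have "\<dots> = (\<Sum>p\<in>{0..<N*N}. if p div N = p mod N then
        (\<Sum>q\<in>{0..<N*N}. if q div N = q mod N then K $$ (q,p) / of_nat N else 0) else 0)"
    by (intro sum.cong refl) (auto simp: max_ent_def intro!: sum.cong)
  also have "\<dots> = (\<Sum>b\<in>{0..<N}. \<Sum>a\<in>{0..<N}. K $$ (a*N+a, b*N+b) / of_nat N)"
    by (simp only: sum_diag_indices[OF N])
  also have "\<dots> = (\<Sum>b\<in>{0..<N}. \<Sum>a\<in>{0..<N}. A $$ (a,b) * B $$ (a,b) / of_nat N)"
    by (intro sum.cong refl) (simp add: K_diag)
  also have "\<dots> = (\<Sum>a\<in>{0..<N}. \<Sum>b\<in>{0..<N}. A $$ (a,b) * B $$ (a,b)) / of_nat N"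
    by (subst sum.swap) (simp add: sum_divide_distrib)
  finally show ?thesis unfolding K_def .
qed

lemma clifford_correlation:
  "mat_trace (max_ent (2^d) * kron (clifford_obs d u) (clifford_obs d v)) = (\<Sum>k<d. u k * v k)"
  by (simp add: max_ent_correlation clifford_obs_carrier clifford_obs_pairing)

section \<open>Facts about the singular value decomposition\<close>

lemma nonincreasing_top_prefix:
  fixes s :: "nat \<Rightarrow> 'a::linorder"
  assumes mono: "\<forall>i j. i \<le> j \<longrightarrow> j < m \<longrightarrow> s j \<le> s i"
    and d: "d = card {i. i < m \<and> s i = s 0}" and k: "k < d"
  shows "k < m" and "s k = s 0"
proof -
  let ?P = "{i. i < m \<and> s i = s 0}"
  have "d \<le> m" using d card_mono[of "{..<m}" ?P] by auto
  then show km: "k < m" using k by simp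
  show "s k = s 0"
  proof (rule ccontr)
    assume ne: "s k \<noteq> s 0"
    have "s i \<noteq> s 0" if "k \<le> i" "i < m" for i
      using mono that km ne by (metis antisym le0)
    then have "?P \<subseteq> {..<k}" by (auto simp: not_less[symmetric])
    then have "d \<le> k" using d card_mono[of "{..<k}" ?P] by auto
    then show False using k by simp
  qed
qed

lemma top_multiplicity_pos:
  fixes s :: "nat \<Rightarrow> 'a"
  assumes "0 < m"
  shows "0 < card {i. i < m \<and> s i = s 0}"
proof -
  have "finite {i. i < m \<and> s i = s 0}" by (rule finite_subset[of _ "{..<m}"]) auto
  then show ?thesis using assms by (subst card_gt_0_iff) auto
qed

lemma svd_diagonal:
  assumes g: "g \<in> carrier_mat M1 M2" and svd: "is_svd M1 M2 g V S W"
    and k1: "k < M1" and k2: "k < M2"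
  shows "(\<Sum>x1<M1. \<Sum>x2<M2. V $$ (x1,k) * g $$ (x1,x2) * W $$ (x2,k)) = S $$ (k,k)"
proof -
  have V: "V \<in> carrier_mat M1 M1" and VV: "transpose_mat V * V = 1\<^sub>m M1"
    and W: "W \<in> carrier_mat M2 M2" and WW: "transpose_mat W * W = 1\<^sub>m M2"
    and S: "S \<in> carrier_mat M1 M2" and g_eq: "g = V * S * transpose_mat W"
    using svd unfolding is_svd_def orthogonal_real_mat_def by auto
  have VT: "transpose_mat V \<in> carrier_mat M1 M1" and WT: "transpose_mat W \<in> carrier_mat M2 M2"
    using V W by auto
  have SWT: "S * transpose_mat W \<in> carrier_mat M1 M2" using S WT by simp
  have "transpose_mat V * g = transpose_mat V * (V * (S * transpose_mat W))"
    unfolding g_eq by (simp only: assoc_mult_mat[OF V S WT])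
  also have "\<dots> = (transpose_mat V * V) * (S * transpose_mat W)"
    by (rule assoc_mult_mat[OF VT V SWT, symmetric])
  also have "\<dots> = S * transpose_mat W" unfolding VV by (rule left_mult_one_mat[OF SWT])
  finally have "transpose_mat V * g * W = S * transpose_mat W * W" by simp
  also have "\<dots> = S * (transpose_mat W * W)" by (rule assoc_mult_mat[OF S WT W])
  also have "\<dots> = S" unfolding WW by (rule right_mult_one_mat[OF S])
  finally have "S $$ (k,k) = (transpose_mat V * g * W) $$ (k,k)" by simp
  also have "\<dots> = (\<Sum>x1<M1. V $$ (x1,k) * (\<Sum>x2<M2. g $$ (x1,x2) * W $$ (x2,k)))"
    using k1 k2 V W g by (simp add: scalar_prod_def atLeast0LessThan)
  finally show ?thesis by (simp add: sum_distrib_left mult.assoc)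
qed

lemma svd_top_pairing:
  assumes g: "g \<in> carrier_mat M1 M2" and svd: "is_svd M1 M2 g V S W"
    and d: "d = card {i. i < min M1 M2 \<and> S $$ (i,i) = S $$ (0,0)}"
  shows "(\<Sum>x1<M1. \<Sum>x2<M2. g $$ (x1,x2) * (\<Sum>k<d. V $$ (x1,k) * W $$ (x2,k)))
       = real d * S $$ (0,0)"
proof -
  have mono: "\<forall>i j. i \<le> j \<longrightarrow> j < min M1 M2 \<longrightarrow> S $$ (j,j) \<le> S $$ (i,i)"
    using svd unfolding is_svd_def by auto
  have top: "k < min M1 M2" "S $$ (k,k) = S $$ (0,0)" if "k < d" for k
    using nonincreasing_top_prefix[of "min M1 M2" "\<lambda>i. S $$ (i,i)", OF mono d that] by auto
  have "(\<Sum>x1<M1. \<Sum>x2<M2. g $$ (x1,x2) * (\<Sum>k<d. V $$ (x1,k) * W $$ (x2,k)))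
      = (\<Sum>x1<M1. \<Sum>x2<M2. \<Sum>k<d. V $$ (x1,k) * g $$ (x1,x2) * W $$ (x2,k))"
    by (simp add: sum_distrib_left mult_ac)
  also have "\<dots> = (\<Sum>x1<M1. \<Sum>k<d. \<Sum>x2<M2. V $$ (x1,k) * g $$ (x1,x2) * W $$ (x2,k))"
    by (rule sum.cong[OF refl]) (rule sum.swap)
  also have "\<dots> = (\<Sum>k<d. \<Sum>x1<M1. \<Sum>x2<M2. V $$ (x1,k) * g $$ (x1,x2) * W $$ (x2,k))"
    by (rule sum.swap)
  also have "\<dots> = (\<Sum>k<d. S $$ (0,0))"
  proof (rule sum.cong[OF refl])
    fix k assume "k \<in> {..<d}"
    then have "k < M1" "k < M2" "S $$ (k,k) = S $$ (0,0)" using top[of k] by auto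
    then show "(\<Sum>x1<M1. \<Sum>x2<M2. V $$ (x1,k) * g $$ (x1,x2) * W $$ (x2,k)) = S $$ (0,0)"
      using svd_diagonal[OF g svd, of k] by simp
  qed
  finally show ?thesis by simp
qed

lemma nonzero_mat_dims:
  assumes "g \<in> carrier_mat M1 M2" and "g \<noteq> 0\<^sub>m M1 M2"
  shows "0 < M1" and "0 < M2"
  using assms by (auto intro!: eq_matI)

definition scaled_row :: "nat \<Rightarrow> nat \<Rightarrow> real mat \<Rightarrow> nat \<Rightarrow> nat \<Rightarrow> complex" where
  "scaled_row M d V x k = complex_of_real (sqrt (real M / real d) * V $$ (x,k))"

lemma scaled_row_unit:
  assumes row: "row_norm_first d V x = sqrt (real d / real M)" and d: "0 < d" and M: "0 < M"
  shows "(\<Sum>k<d. scaled_row M d V x k * scaled_row M d V x k) = 1"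
proof -
  have "(\<Sum>k<d. scaled_row M d V x k * scaled_row M d V x k)
      = complex_of_real (real M / real d * (\<Sum>k<d. (V $$ (x,k))\<^sup>2))"
    by (simp add: scaled_row_def sum_distrib_left power2_eq_square mult_ac flip: of_real_mult)
  also have "(\<Sum>k<d. (V $$ (x,k))\<^sup>2) = real d / real M"
    using row unfolding row_norm_first_def by (simp add: sum_nonneg)
  finally show ?thesis using d M by simp
qed

lemma scaled_row_observable:
  assumes "row_norm_first d V x = sqrt (real d / real M)" and "0 < d" and "0 < M"
  shows "observable (2^d) (clifford_obs d (scaled_row M d V x))"
  using assms by (intro clifford_obs_observable scaled_row_unit) (simp add: scaled_row_def)

lemma scaled_rows_value:
  assumes g: "g \<in> carrier_mat M1 M2" and svd: "is_svd M1 M2 g V S W"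
    and d: "d = card {i. i < min M1 M2 \<and> S $$ (i,i) = S $$ (0,0)}" and dpos: "0 < d"
  shows "(\<Sum>x1<M1. \<Sum>x2<M2. complex_of_real (g $$ (x1,x2))
            * (\<Sum>k<d. scaled_row M1 d V x1 k * scaled_row M2 d W x2 k))
       = complex_of_real (sqrt (real M1 * real M2) * S $$ (0,0))"
proof -
  define c where "c = sqrt (real M1 / real d) * sqrt (real M2 / real d)"
  have corr: "(\<Sum>k<d. scaled_row M1 d V x1 k * scaled_row M2 d W x2 k)
      = complex_of_real (c * (\<Sum>k<d. V $$ (x1,k) * W $$ (x2,k)))" for x1 x2
    by (simp add: scaled_row_def c_def sum_distrib_left mult_ac)
  have scale: "c * real d = sqrt (real M1 * real M2)"
    unfolding c_def using dpos by (simp add: real_sqrt_mult[symmetric] real_sqrt_divide)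
  have "(\<Sum>x1<M1. \<Sum>x2<M2. complex_of_real (g $$ (x1,x2))
            * (\<Sum>k<d. scaled_row M1 d V x1 k * scaled_row M2 d W x2 k))
      = complex_of_real (\<Sum>x1<M1. \<Sum>x2<M2. g $$ (x1,x2) * (c * (\<Sum>k<d. V $$ (x1,k) * W $$ (x2,k))))"
    by (simp only: corr of_real_mult of_real_sum)
  also have "(\<Sum>x1<M1. \<Sum>x2<M2. g $$ (x1,x2) * (c * (\<Sum>k<d. V $$ (x1,k) * W $$ (x2,k))))
      = c * (\<Sum>x1<M1. \<Sum>x2<M2. g $$ (x1,x2) * (\<Sum>k<d. V $$ (x1,k) * W $$ (x2,k)))"
    by (simp add: sum_distrib_left mult.left_commute)
  also have "\<dots> = sqrt (real M1 * real M2) * S $$ (0,0)"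
    unfolding svd_top_pairing[OF g svd d] scale[symmetric] by simp
  finally show ?thesis .
qed

theorem corollary1:
  fixes M1 M2 :: nat and g V S W :: "real mat" and d :: nat
  assumes g: "g \<in> carrier_mat M1 M2" and gnz: "g \<noteq> 0\<^sub>m M1 M2"
    and svd: "is_svd M1 M2 g V S W"
    and d: "d = card {i. i < min M1 M2 \<and> S $$ (i,i) = S $$ (0,0)}"
    and rowsV: "\<forall>i<M1. row_norm_first d V i = sqrt (real d / real M1)"
    and rowsW: "\<forall>j<M2. row_norm_first d W j = sqrt (real d / real M2)"
  shows "\<exists>n1 n2 :: nat. \<exists>\<rho> :: complex mat. \<exists>A1 A2 :: nat \<Rightarrow> complex mat.
           density_mat (n1 * n2) \<rho> \<and>
           (\<forall>x1<M1. observable n1 (A1 x1)) \<and> (\<forall>x2<M2. observable n2 (A2 x2)) \<and>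
           (\<Sum>x1<M1. \<Sum>x2<M2. complex_of_real (g $$ (x1,x2)) * mat_trace (\<rho> * kron (A1 x1) (A2 x2)))
             = complex_of_real (sqrt (real M1 * real M2) * S $$ (0,0))"
proof -
  have M1: "0 < M1" and M2: "0 < M2" using nonzero_mat_dims[OF g gnz] by auto
  have dpos: "0 < d" unfolding d using M1 M2 by (intro top_multiplicity_pos) simp
  define A1 where "A1 x = clifford_obs d (scaled_row M1 d V x)" for x
  define A2 where "A2 x = clifford_obs d (scaled_row M2 d W x)" for x
  show ?thesis
  proof (intro exI conjI allI impI)
    show "density_mat (2^d * 2^d) (max_ent (2^d))" by (rule max_ent_density) simp
    show "observable (2^d) (A1 x)" if "x < M1" for x
      unfolding A1_def using rowsV that dpos M1 by (intro scaled_row_observable) auto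
    show "observable (2^d) (A2 x)" if "x < M2" for x
      unfolding A2_def using rowsW that dpos M2 by (intro scaled_row_observable) auto
    show "(\<Sum>x1<M1. \<Sum>x2<M2. complex_of_real (g $$ (x1,x2)) * mat_trace (max_ent (2^d) * kron (A1 x1) (A2 x2)))
        = complex_of_real (sqrt (real M1 * real M2) * S $$ (0,0))"
      unfolding A1_def A2_def clifford_correlation by (rule scaled_rows_value[OF g svd d dpos])
  qed
qed

end
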